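(* Let $G\in\mathfrak{Y}_n$ be a finite soluble non-nilpotent group, let $F$ be its Fitting subgroup, and let $p=|G:F|$ (a prime). Then the Sylow $p$-subgroups of $G$ are cyclic, and for every prime $r\neq p$ the Sylow $r$-subgroups of $G$ are abelian.
   Context: $\mathfrak{Y}_n$ denotes the class of all groups $G$ such that $N_G(A)=A$ for every non-abelian subgroup $A\le G$. The Fitting subgroup is the subgroup generated by all nilpotent normal subgroups. *)

theory Defs
  imports "HOL-Algebra.Algebra" "HOL-Computational_Algebra.Primes"
begin

fun lower_central :: "('a, 'b) monoid_scheme \<Rightarrow> nat \<Rightarrow> 'a set" where
  "lower_central G 0 = carrier G"
| "lower_central G (Suc n) =
     generate G {x \<otimes>\<^bsub>G\<^esub> y \<otimes>\<^bsub>G\<^esub> inv\<^bsub>G\<^esub> x \<otimes>\<^bsub>G\<^esub> inv\<^bsub>G\<^esub> y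
                 | x y. x \<in> lower_central G n \<and> y \<in> carrier G}"

definition nilpotent_grp :: "('a, 'b) monoid_scheme \<Rightarrow> bool" where
  "nilpotent_grp G \<longleftrightarrow> (\<exists>n. lower_central G n = {\<one>\<^bsub>G\<^esub>})"

definition fitting_subgroup :: "('a, 'b) monoid_scheme \<Rightarrow> 'a set" where
  "fitting_subgroup G =
     generate G (\<Union>{N. N \<lhd> G \<and> nilpotent_grp (G\<lparr>carrier := N\<rparr>)})"

definition class_Yn :: "('a, 'b) monoid_scheme \<Rightarrow> bool" where
  "class_Yn G \<longleftrightarrow> (\<forall>A. subgroup A G \<longrightarrow> \<not> comm_group (G\<lparr>carrier := A\<rparr>)
                         \<longrightarrow> normalizer G A = A)"

definition sylow_subgroup :: "('a, 'b) monoid_scheme \<Rightarrow> nat \<Rightarrow> 'a set \<Rightarrow> bool" where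
  "sylow_subgroup G r P \<longleftrightarrow>
     subgroup P G \<and> card P = r ^ multiplicity r (order G)"

end

theory Submission
  imports Defs "HOL-Algebra.Multiplicative_Group"
begin

text \<open>
  A non-abelian subgroup of a group in \<open>\<Y>\<^sub>n\<close> is self-normalising, so the Fitting subgroup
  \<open>F\<close>, being normal of prime index \<open>p\<close>, is abelian; it contains every abelian normal subgroup.
  Since \<open>g\<^sup>p \<in> F\<close> for all \<open>g\<close>, a Sylow \<open>r\<close>-subgroup with \<open>r \<noteq> p\<close> lies in \<open>F\<close> and is abelian.
  For a Sylow \<open>p\<close>-subgroup \<open>P\<close> pick \<open>x \<in> P - F\<close>. If \<open>\<langle>x\<rangle> \<noteq> P\<close>, enlarge \<open>\<langle>x\<rangle>\<close> to a proper
  subgroup \<open>M\<close> of \<open>P\<close> normalised by \<open>P\<close> (normalisers grow in \<open>p\<close>-groups), and let \<open>Q\<close> be the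
  \<open>p'\<close>-part of \<open>F\<close>, so that \<open>F \<subseteq> QP\<close> and \<open>P \<inter> Q = 1\<close>. Then \<open>P\<close> normalises \<open>H = QM\<close>.
  If \<open>H\<close> is not abelian, \<open>P \<subseteq> N\<^sub>G(H) = H\<close> forces \<open>P \<subseteq> M\<close>; if \<open>H\<close> is abelian, \<open>N\<^sub>G(H)\<close>
  contains \<open>F\<close> and \<open>x\<close>, hence is \<open>G\<close>, and then \<open>x \<in> H \<subseteq> F\<close>. So \<open>P = \<langle>x\<rangle>\<close> is cyclic.
\<close>

section \<open>Conjugation and normalisers\<close>

context group begin

lemma conjugate_eq_image: "g <# H #> inv g = (\<lambda>h. g \<otimes> h \<otimes> inv g) ` H"
  unfolding l_coset_def r_coset_def by auto

lemma inj_on_conjugation: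
  assumes "H \<subseteq> carrier G" "g \<in> carrier G"
  shows "inj_on (\<lambda>h. g \<otimes> h \<otimes> inv g) H"
  using assms by (auto simp: inj_on_def subsetD)

lemma inv_mult_cancel_left [simp]:
  "x \<in> carrier G \<Longrightarrow> y \<in> carrier G \<Longrightarrow> inv x \<otimes> (x \<otimes> y) = y"
  by (simp add: m_assoc[symmetric])

lemma mult_inv_cancel_left [simp]:
  "x \<in> carrier G \<Longrightarrow> y \<in> carrier G \<Longrightarrow> x \<otimes> (inv x \<otimes> y) = y"
  by (simp add: m_assoc[symmetric])

lemma conj_mult:
  assumes "g \<in> carrier G" "x \<in> carrier G" "y \<in> carrier G"
  shows "g \<otimes> (x \<otimes> y) \<otimes> inv g = (g \<otimes> x \<otimes> inv g) \<otimes> (g \<otimes> y \<otimes> inv g)"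
  using assms by (simp add: m_assoc)

lemma conj_conj_inv:
  assumes "g \<in> carrier G" "x \<in> carrier G"
  shows "g \<otimes> (inv g \<otimes> x \<otimes> g) \<otimes> inv g = x"
  using assms by (simp add: m_assoc)

lemma conj_nat_pow:
  assumes "g \<in> carrier G" "x \<in> carrier G"
  shows "(g \<otimes> x \<otimes> inv g) [^] (n::nat) = g \<otimes> x [^] n \<otimes> inv g"
proof (induction n)
  case (Suc n)
  then show ?case using conj_mult[OF assms(1) nat_pow_closed[OF assms(2)] assms(2)] by simp
qed (use assms in simp)

lemma mem_normalizer_iff:
  assumes "H \<subseteq> carrier G"
  shows "g \<in> normalizer G H \<longleftrightarrow> g \<in> carrier G \<and> (\<lambda>h. g \<otimes> h \<otimes> inv g) ` H = H"
  using assms unfolding normalizer_def stabilizer_def conjugate_eq_image by auto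

lemma normalizer_conj_mem:
  assumes "H \<subseteq> carrier G" "g \<in> normalizer G H" "h \<in> H"
  shows "g \<otimes> h \<otimes> inv g \<in> H"
  using assms mem_normalizer_iff by blast

lemma subgroup_subset_normalizerI:
  assumes "H \<subseteq> carrier G" "subgroup A G"
    and conj: "\<And>g h. g \<in> A \<Longrightarrow> h \<in> H \<Longrightarrow> g \<otimes> h \<otimes> inv g \<in> H"
  shows "A \<subseteq> normalizer G H"
proof
  fix g assume g: "g \<in> A"
  have gc: "g \<in> carrier G" using subgroup.mem_carrier[OF assms(2) g] .
  have "h \<in> (\<lambda>h. g \<otimes> h \<otimes> inv g) ` H" if h: "h \<in> H" for h
  proof
    show "inv g \<otimes> h \<otimes> inv (inv g) \<in> H"
      using conj[OF subgroup.m_inv_closed[OF assms(2) g] h] .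
    show "h = g \<otimes> (inv g \<otimes> h \<otimes> inv (inv g)) \<otimes> inv g"
      using gc h assms(1) by (simp add: conj_conj_inv subsetD)
  qed
  then have "(\<lambda>h. g \<otimes> h \<otimes> inv g) ` H = H" using conj[OF g] by blast
  then show "g \<in> normalizer G H" using mem_normalizer_iff[OF assms(1)] gc by blast
qed

lemma subgroup_subset_normalizer:
  assumes "subgroup M G"
  shows "M \<subseteq> normalizer G M"
  using subgroup_subset_normalizerI[OF subgroup.subset[OF assms] assms] assms
  by (meson subgroup.m_closed subgroup.m_inv_closed)

lemma normal_iff_carrier_subset_normalizer:
  assumes H: "subgroup H G"
  shows "H \<lhd> G \<longleftrightarrow> carrier G \<subseteq> normalizer G H"
proof
  assume "H \<lhd> G"
  then show "carrier G \<subseteq> normalizer G H"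
    by (intro subgroup_subset_normalizerI[OF subgroup.subset[OF H] subgroup_self] normal.inv_op_closed2)
next
  assume N: "carrier G \<subseteq> normalizer G H"
  show "H \<lhd> G"
  proof (rule normal_invI[OF H])
    fix x h assume "x \<in> carrier G" "h \<in> H"
    then show "x \<otimes> h \<otimes> inv x \<in> H" using normalizer_conj_mem[OF subgroup.subset[OF H]] N by blast
  qed
qed

lemma normalizer_set_mult:
  assumes Q: "Q \<lhd> G" and M: "M \<subseteq> carrier G" and A: "subgroup A G" "A \<subseteq> normalizer G M"
  shows "A \<subseteq> normalizer G (Q <#> M)"
proof -
  interpret Q: normal Q G by (rule Q)
  show ?thesis
  proof (rule subgroup_subset_normalizerI[OF setmult_subset_G[OF Q.subset M] A(1)])
    fix g h assume g: "g \<in> A" and "h \<in> Q <#> M"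
    then obtain q m where qm: "q \<in> Q" "m \<in> M" "h = q \<otimes> m" unfolding set_mult_def by blast
    have gc: "g \<in> carrier G" using subgroup.mem_carrier[OF A(1) g] .
    have "g \<otimes> h \<otimes> inv g = (g \<otimes> q \<otimes> inv g) \<otimes> (g \<otimes> m \<otimes> inv g)"
      using conj_mult[OF gc] qm Q.subset M by (simp add: subsetD)
    moreover have "g \<otimes> q \<otimes> inv g \<in> Q" using Q.inv_op_closed2[OF gc qm(1)] .
    moreover have "g \<otimes> m \<otimes> inv g \<in> M" using normalizer_conj_mem[OF M _ qm(2)] g A(2) by blast
    ultimately show "g \<otimes> h \<otimes> inv g \<in> Q <#> M" unfolding set_mult_def by blast
  qed
qed

lemma conjugate_eq_if_subset:
  assumes "M \<subseteq> carrier G" "finite M" "g \<in> carrier G"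
    and "\<And>h. h \<in> M \<Longrightarrow> inv g \<otimes> h \<otimes> g \<in> M"
  shows "g <# M #> inv g = M"
proof -
  have "M \<subseteq> (\<lambda>h. g \<otimes> h \<otimes> inv g) ` M"
  proof
    fix m assume m: "m \<in> M"
    have "m = g \<otimes> (inv g \<otimes> m \<otimes> g) \<otimes> inv g"
      using m assms(1,3) by (simp add: conj_conj_inv subsetD)
    then show "m \<in> (\<lambda>h. g \<otimes> h \<otimes> inv g) ` M" using assms(4)[OF m] by blast
  qed
  moreover have "card ((\<lambda>h. g \<otimes> h \<otimes> inv g) ` M) = card M"
    using card_image[OF inj_on_conjugation[OF assms(1,3)]] .
  ultimately show ?thesis
    unfolding conjugate_eq_image using assms(2) by (metis card_subset_eq finite_imageI)
qed

end

lemma (in group_action) conj_mem_stabilizer: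
  assumes "g \<in> carrier G" "x \<in> E" "h \<in> stabilizer G \<phi> (\<phi> g x)"
  shows "inv\<^bsub>G\<^esub> g \<otimes>\<^bsub>G\<^esub> h \<otimes>\<^bsub>G\<^esub> g \<in> stabilizer G \<phi> x"
proof -
  interpret group G using group_hom group_hom.axioms(1) by blast
  have h: "h \<in> carrier G" "\<phi> h (\<phi> g x) = \<phi> g x" using assms(3) unfolding stabilizer_def by auto
  have gx: "\<phi> g x \<in> E" using element_image assms(1,2) by blast
  have "\<phi> (inv g \<otimes> h \<otimes> g) x = \<phi> (inv g) (\<phi> h (\<phi> g x))"
    using composition_rule assms(1,2) h gx by (simp add: m_assoc)
  also have "\<dots> = x" using h orbit_sym_aux[OF assms(1,2) refl] by simp
  finally show ?thesis unfolding stabilizer_def using assms(1) h by simp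
qed

context group begin

lemma normalizer_conjugate:
  assumes "H \<subseteq> carrier G" "g \<in> carrier G" "h \<in> normalizer G (g <# H #> inv g)"
  shows "inv g \<otimes> h \<otimes> g \<in> normalizer G H"
proof -
  interpret conj: group_action G "{H. H \<subseteq> carrier G}" "\<lambda>g. \<lambda>H \<in> {H. H \<subseteq> carrier G}. g <# H #> (inv g)"
    by (rule action_by_conjugation_on_power_set)
  show ?thesis using conj.conj_mem_stabilizer[of g H h] assms unfolding normalizer_def by simp
qed

end

section \<open>Element orders and Sylow subgroups\<close>

context group begin

lemma subgroup_nat_pow_closed:
  assumes "subgroup H G" "h \<in> H"
  shows "h [^] (n::nat) \<in> H"
  using subgroup_int_pow_closed[OF assms, of "int n"] int_pow_int by metis

lemma pow_eq_one_coprime: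
  assumes "x \<in> carrier G" "x [^] (a::nat) = \<one>" "x [^] (b::nat) = \<one>" "coprime a b"
  shows "x = \<one>"
proof -
  have "ord x dvd a" "ord x dvd b" using assms pow_eq_id by auto
  then have "ord x dvd gcd a b" by simp
  then have "ord x = 1" using assms(4) by simp
  then show ?thesis using assms(1) ord_eq_1 by blast
qed

lemma subgroup_pow_card_eq_one:
  assumes "subgroup P G" "finite P" "y \<in> P"
  shows "y [^] card P = \<one>"
proof -
  interpret P: group "G\<lparr>carrier := P\<rparr>" using subgroup_imp_group[OF assms(1)] .
  have "y [^]\<^bsub>G\<lparr>carrier := P\<rparr>\<^esub> order (G\<lparr>carrier := P\<rparr>) = \<one>"
    using P.pow_order_eq_1 assms by simp
  moreover have "order (G\<lparr>carrier := P\<rparr>) = card P" by (simp add: order_def)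
  ultimately show ?thesis using nat_pow_consistent[of y "card P" P] by simp
qed

lemma card_subgroup_dvd:
  assumes "subgroup H G" "subgroup K G" "H \<subseteq> K"
  shows "card H dvd card K"
proof -
  interpret K: group "G\<lparr>carrier := K\<rparr>" using subgroup_imp_group[OF assms(2)] .
  have "card (rcosets\<^bsub>G\<lparr>carrier := K\<rparr>\<^esub> H) * card H = card K"
    using K.lagrange[OF subgroup_incl[OF assms]] by (simp add: order_def)
  then show ?thesis by (metis dvd_triv_right)
qed

end

lemma prime_power_if_prime_divisors_eq:
  fixes n p :: nat
  assumes "n > 0" "Factorial_Ring.prime p" "\<And>r. Factorial_Ring.prime r \<Longrightarrow> r dvd n \<Longrightarrow> r = p"
  shows "n = p ^ multiplicity p n"
proof -
  obtain m where m: "n = p ^ multiplicity p n * m" "\<not> p dvd m"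
    using multiplicity_decompose'[of n p] assms(1,2) by (metis not_prime_unit not_gr0)
  have "m = 1"
  proof (rule ccontr)
    assume "m \<noteq> 1"
    then obtain r where r: "Factorial_Ring.prime r" "r dvd m" using prime_factor_nat by blast
    then have "r dvd n" using m(1) by (metis dvd_mult)
    then show False using assms(3) r m(2) by blast
  qed
  then show ?thesis using m by simp
qed

lemma prime_dvd_of_mult_eq_prime_power:
  fixes p k m :: nat
  assumes p: "Factorial_Ring.prime p" and km: "k * m = p ^ a" and "m < p ^ a"
  shows "p dvd k"
proof -
  obtain j where j: "k = p ^ j" using divides_primepow_nat[OF p] km by (metis dvd_triv_left)
  have "j \<noteq> 0"
  proof
    assume "j = 0"
    then show False using km j \<open>m < p ^ a\<close> by simp
  qed
  then show ?thesis using j by simp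
qed

context group begin

lemma card_eq_prime_power_if_exponent:
  assumes S: "subgroup S G" "finite S" and p: "Factorial_Ring.prime p"
    and exp: "\<And>s. s \<in> S \<Longrightarrow> s [^] (p ^ c) = \<one>"
  shows "card S = p ^ multiplicity p (card S)"
proof (rule prime_power_if_prime_divisors_eq[OF _ p])
  show "card S > 0" using S(2) subgroup.one_closed[OF S(1)] by (auto simp: card_gt_0_iff)
  fix r assume r: "Factorial_Ring.prime r" "r dvd card S"
  interpret SG: group "G\<lparr>carrier := S\<rparr>" using subgroup_imp_group[OF S(1)] .
  \<comment> \<open>Sylow's theorem with exponent 1 serves as Cauchy's theorem.\<close>
  have "order (G\<lparr>carrier := S\<rparr>) = r ^ 1 * (card S div r)" using r(2) by (simp add: order_def)
  from sylow_thm[OF r(1) SG.is_group this] obtain R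
    where R: "subgroup R (G\<lparr>carrier := S\<rparr>)" "card R = r" using S(2) by auto
  have RS: "R \<subseteq> S" using subgroup.subset[OF R(1)] by simp
  have RG: "subgroup R G" using incl_subgroup[OF S(1) R(1)] .
  have "R \<noteq> {\<one>}"
  proof
    assume "R = {\<one>}"
    then show False using R(2) r(1) by auto
  qed
  then obtain y where y: "y \<in> R" "y \<noteq> \<one>" using subgroup.one_closed[OF RG] by blast
  have yc: "y \<in> carrier G" using y(1) subgroup.subset[OF RG] by blast
  have "y [^] r = \<one>" using subgroup_pow_card_eq_one[OF RG finite_subset[OF RS S(2)] y(1)] R(2) by simp
  moreover have "y [^] (p ^ c) = \<one>" using exp y(1) RS by blast
  moreover have "coprime r (p ^ c)" if "r \<noteq> p" using that primes_coprime[OF r(1) p] by simp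
  ultimately show "r = p" using pow_eq_one_coprime[OF yc] y(2) by blast
qed

lemma card_prime_power_subgroup_le_sylow:
  assumes fin: "finite (carrier G)" and p: "Factorial_Ring.prime p"
    and S: "subgroup S G" "card S = p ^ k" and P: "sylow_subgroup G p P"
  shows "card S \<le> card P"
proof -
  have "order G \<noteq> 0" using fin order_gt_0_iff_finite by simp
  moreover have "p ^ k dvd order G" using lagrange[OF S(1)] S(2) by (metis dvd_triv_right)
  ultimately have "k \<le> multiplicity p (order G)"
    using power_dvd_iff_le_multiplicity not_prime_unit p by blast
  then have "p ^ k \<le> p ^ multiplicity p (order G)" using power_increasing prime_ge_1_nat[OF p] by blast
  then show ?thesis using S(2) P unfolding sylow_subgroup_def by simp
qed

end

section \<open>Actions of \<open>p\<close>-groups\<close>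

lemma (in group_action) orbit_subset_E: "x \<in> E \<Longrightarrow> orbit G \<phi> x \<subseteq> E"
  unfolding orbit_def using element_image by blast

lemma (in group_action) orbit_eq_if_mem:
  assumes "x \<in> E" "y \<in> orbit G \<phi> x"
  shows "orbit G \<phi> y = orbit G \<phi> x"
proof -
  have y: "y \<in> E" using assms orbit_subset_E by blast
  have "x \<in> orbit G \<phi> y" using orbit_sym[OF assms(1) y assms(2)] .
  then show ?thesis
    using assms y orbit_trans orbit_subset_E by (meson subsetD subset_antisym subsetI)
qed

lemma (in group_action) orbit_subset_Diff_orbit:
  assumes S: "S \<subseteq> E" "\<And>y. y \<in> S \<Longrightarrow> orbit G \<phi> y \<subseteq> S" and x: "x \<in> E"
    and y: "y \<in> S - orbit G \<phi> x"
  shows "orbit G \<phi> y \<subseteq> S - orbit G \<phi> x"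
proof
  fix z assume z: "z \<in> orbit G \<phi> y"
  have yE: "y \<in> E" using y S(1) by blast
  have "z \<notin> orbit G \<phi> x"
  proof
    assume "z \<in> orbit G \<phi> x"
    then have "orbit G \<phi> y = orbit G \<phi> x" using orbit_eq_if_mem[OF yE z] orbit_eq_if_mem[OF x] by simp
    then show False using y orbit_refl[OF yE] by blast
  qed
  then show "z \<in> S - orbit G \<phi> x" using z y S(2) by blast
qed

lemma (in group_action) card_orbit_prime_power:
  assumes "order G = p ^ b" "Factorial_Ring.prime p" "x \<in> E"
  obtains j where "card (orbit G \<phi> x) = p ^ j"
proof -
  have "card (orbit G \<phi> x) dvd p ^ b"
    using orbit_stabilizer_theorem[OF assms(3)] assms(1) by (metis dvd_triv_left)
  then show ?thesis using divides_primepow_nat[OF assms(2)] that by blast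
qed

lemma (in group_action) card_fixed_points_mod:
  assumes order: "order G = p ^ b" and p: "Factorial_Ring.prime p"
    and "finite S" "S \<subseteq> E" "\<And>x. x \<in> S \<Longrightarrow> orbit G \<phi> x \<subseteq> S"
  shows "card S mod p = card {x \<in> S. orbit G \<phi> x = {x}} mod p"
  using assms(3-5)
proof (induction S rule: finite_psubset_induct)
  case (psubset S)
  show ?case
  proof (cases "S = {}")
    case False
    then obtain x where x: "x \<in> S" by blast
    define Orb where "Orb = orbit G \<phi> x"
    have xE: "x \<in> E" using x psubset.prems(1) by blast
    have xOrb: "x \<in> Orb" unfolding Orb_def using orbit_refl[OF xE] .
    have OrbS: "Orb \<subseteq> S" unfolding Orb_def using psubset.prems(2)[OF x] .
    have orbit_Orb: "orbit G \<phi> y = Orb" if "y \<in> Orb" for y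
      using orbit_eq_if_mem[OF xE] that unfolding Orb_def .
    have "orbit G \<phi> y \<subseteq> S - Orb" if "y \<in> S - Orb" for y
      using orbit_subset_Diff_orbit[of S x y] psubset.prems xE that unfolding Orb_def by blast
    then have IH: "card (S - Orb) mod p = card {y \<in> S - Orb. orbit G \<phi> y = {y}} mod p"
      using psubset.IH[of "S - Orb"] xOrb x psubset.prems(1) by blast
    have card_S: "card S = card (S - Orb) + card Orb"
      using card_Diff_subset[OF finite_subset[OF OrbS psubset.hyps] OrbS] card_mono[OF psubset.hyps OrbS]
      by simp
    obtain j where j: "card Orb = p ^ j"
      using card_orbit_prime_power[OF order p xE] unfolding Orb_def .
    show ?thesis
    proof (cases "j = 0")
      case True
      then have "Orb = {x}" using j xOrb by (metis card_1_singletonE power_0 singletonD)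
      then have "{y \<in> S. orbit G \<phi> y = {y}} = insert x {y \<in> S - Orb. orbit G \<phi> y = {y}}"
        using x orbit_Orb by auto
      then have fixed: "card {y \<in> S. orbit G \<phi> y = {y}} = Suc (card {y \<in> S - Orb. orbit G \<phi> y = {y}})"
        using xOrb psubset.hyps by simp
      have "card S mod p = Suc (card (S - Orb)) mod p" using card_S j True by simp
      also have "\<dots> = Suc (card {y \<in> S - Orb. orbit G \<phi> y = {y}}) mod p"
        using IH mod_Suc_eq by metis
      finally show ?thesis using fixed by simp
    next
      case False
      then have "p dvd card Orb" using j by simp
      have "y \<notin> Orb" if "orbit G \<phi> y = {y}" for y
      proof
        assume "y \<in> Orb"
        then have "card Orb = 1" using orbit_Orb that by fastforce
        then show False using \<open>p dvd card Orb\<close> p by (simp add: prime_gt_1_nat)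
      qed
      then have "{y \<in> S. orbit G \<phi> y = {y}} = {y \<in> S - Orb. orbit G \<phi> y = {y}}" by blast
      then show ?thesis using IH card_S \<open>p dvd card Orb\<close> by (auto elim!: dvdE)
    qed
  qed simp
qed

context group begin

lemma conjugate_eq_if_normalized:
  assumes P: "subgroup P G" and M: "subgroup M G" "finite M" "M \<subseteq> P" "normalizer G M \<inter> P \<subseteq> M"
    and g: "g \<in> P" and MN: "M \<subseteq> normalizer G (g <# M #> inv g)"
  shows "g <# M #> inv g = M"
proof (rule conjugate_eq_if_subset)
  show Mc: "M \<subseteq> carrier G" and gc: "g \<in> carrier G"
    using subgroup.subset[OF M(1)] subgroup.subset[OF P] g by auto
  fix h assume h: "h \<in> M"
  then have "inv g \<otimes> h \<otimes> g \<in> normalizer G M" using normalizer_conjugate[OF Mc gc] MN by blast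
  moreover have "inv g \<otimes> h \<otimes> g \<in> P"
    using g h M(3) P by (meson subgroup.m_closed subgroup.m_inv_closed subsetD)
  ultimately show "inv g \<otimes> h \<otimes> g \<in> M" using M(4) by blast
qed (use M(2) in simp)

lemma p_subgroup_normalizer_grows:
  assumes P: "subgroup P G" "card P = p ^ a" and p: "Factorial_Ring.prime p"
    and M: "subgroup M G" "M \<subseteq> P" "M \<noteq> P"
  shows "\<exists>g \<in> P - M. g \<in> normalizer G M"
proof (rule ccontr)
  assume "\<not> ?thesis"
  \<comment> \<open>Then \<open>M\<close> is the only conjugate of \<open>M\<close> under \<open>P\<close> fixed by \<open>M\<close>, but their number is divisible by \<open>p\<close>.\<close>
  then have N_M: "normalizer G M \<inter> P = M" using subgroup_subset_normalizer[OF M(1)] M(2) by blast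
  define U where "U = {H. H \<subseteq> carrier G}"
  define \<phi> where "\<phi> = (\<lambda>g. \<lambda>H \<in> {H. H \<subseteq> carrier G}. g <# H #> (inv g))"
  interpret conj: group_action G U \<phi>
    unfolding \<phi>_def U_def by (rule action_by_conjugation_on_power_set)
  interpret P_conj: group_action "G\<lparr>carrier := P\<rparr>" U \<phi> using conj.induced_action[OF P(1)] .
  interpret M_conj: group_action "G\<lparr>carrier := M\<rparr>" U \<phi> using conj.induced_action[OF M(1)] .
  have normalizer_eq: "normalizer G H = stabilizer G \<phi> H" for H
    unfolding normalizer_def \<phi>_def ..
  have finP: "finite P" using P(2) p by (metis card.infinite not_prime_0 power_eq_0_iff)
  have Mc: "M \<subseteq> carrier G" using subgroup.subset[OF M(1)] .
  have MU: "M \<in> U" using Mc U_def by simp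
  define S where "S = orbit (G\<lparr>carrier := P\<rparr>) \<phi> M"
  have "stabilizer (G\<lparr>carrier := P\<rparr>) \<phi> M = M"
    using N_M subgroup.subset[OF P(1)] unfolding normalizer_eq stabilizer_def by auto
  then have card_S: "card S * card M = p ^ a"
    using P_conj.orbit_stabilizer_theorem[OF MU] P(2) by (simp add: order_def S_def)
  moreover have "card M < card P" using psubset_card_mono[OF finP] M(2,3) by blast
  ultimately have "p dvd card S" using prime_dvd_of_mult_eq_prime_power[OF p] P(2) by simp
  from card_S obtain b where b: "card M = p ^ b" using divides_primepow_nat[OF p] by (metis dvd_triv_right)
  have "finite S" using card_S p by (metis card.infinite mult_0 not_prime_0 power_eq_0_iff)
  have orbit_S: "orbit (G\<lparr>carrier := M\<rparr>) \<phi> y \<subseteq> S" if "y \<in> S" for y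
  proof -
    have "orbit (G\<lparr>carrier := M\<rparr>) \<phi> y \<subseteq> orbit (G\<lparr>carrier := P\<rparr>) \<phi> y"
      unfolding orbit_def using M(2) by auto
    then show ?thesis using P_conj.orbit_eq_if_mem[OF MU] that unfolding S_def by blast
  qed
  have fixed_points: "{y \<in> S. orbit (G\<lparr>carrier := M\<rparr>) \<phi> y = {y}} = {M}"
  proof (intro equalityI subsetI)
    fix y assume "y \<in> {y \<in> S. orbit (G\<lparr>carrier := M\<rparr>) \<phi> y = {y}}"
    then have y: "y \<in> S" "orbit (G\<lparr>carrier := M\<rparr>) \<phi> y = {y}" by auto
    then obtain g where g: "g \<in> P" "y = g <# M #> inv g" unfolding S_def orbit_def \<phi>_def using Mc by auto
    have "M \<subseteq> normalizer G (g <# M #> inv g)"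
      using y g Mc unfolding normalizer_eq stabilizer_def orbit_def by auto
    then show "y \<in> {M}"
      using conjugate_eq_if_normalized[OF P(1) M(1) finite_subset[OF M(2) finP] M(2) _ g(1)] N_M g(2) by simp
  next
    fix y assume "y \<in> {M}"
    moreover have "M \<in> S" unfolding S_def using P_conj.orbit_refl[OF MU] .
    moreover have "\<phi> h M = M" if "h \<in> M" for h
      using that subgroup_subset_normalizer[OF M(1)] unfolding normalizer_eq stabilizer_def by auto
    then have "orbit (G\<lparr>carrier := M\<rparr>) \<phi> M = {M}"
      unfolding orbit_def using subgroup.one_closed[OF M(1)] by auto
    ultimately show "y \<in> {y \<in> S. orbit (G\<lparr>carrier := M\<rparr>) \<phi> y = {y}}" by simp
  qed
  have "card S mod p = 1 mod p"
    using M_conj.card_fixed_points_mod[of p b S] fixed_points b \<open>finite S\<close> orbit_S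
      P_conj.orbit_subset_E[OF MU] p by (simp add: order_def S_def)
  then have "p dvd 1" using \<open>p dvd card S\<close> by (simp add: dvd_eq_mod_eq_0)
  then show False using p by simp
qed

lemma p_subgroup_normalized_maximal_subgroup:
  assumes P: "subgroup P G" "card P = p ^ a" and p: "Factorial_Ring.prime p"
    and K: "subgroup K G" "K \<subseteq> P" "K \<noteq> P"
  obtains M where "subgroup M G" "K \<subseteq> M" "M \<subseteq> P" "M \<noteq> P" "P \<subseteq> normalizer G M"
proof -
  define \<K> where "\<K> = {M. subgroup M G \<and> K \<subseteq> M \<and> M \<subseteq> P \<and> M \<noteq> P}"
  have finP: "finite P" using P(2) p by (metis card.infinite not_prime_0 power_eq_0_iff)
  have "finite \<K>" by (rule finite_subset[of _ "Pow P"]) (use finP in \<open>auto simp: \<K>_def\<close>)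
  moreover have "K \<in> \<K>" using K unfolding \<K>_def by blast
  ultimately have "Max (card ` \<K>) \<in> card ` \<K>" by (intro Max_in) auto
  then obtain M where M: "M \<in> \<K>" "card M = Max (card ` \<K>)" by (metis imageE)
  have max: "card M' \<le> card M" if "M' \<in> \<K>" for M'
    using Max_ge[OF finite_imageI[OF \<open>finite \<K>\<close>] imageI[OF that]] M(2) by simp
  have Ms: "subgroup M G" and KM: "K \<subseteq> M" and MP: "M \<subseteq> P" "M \<noteq> P"
    using M(1) unfolding \<K>_def by auto
  obtain g where g: "g \<in> P - M" "g \<in> normalizer G M"
    using p_subgroup_normalizer_grows[OF P p Ms MP] by blast
  define N where "N = normalizer G M \<inter> P"
  have Ns: "subgroup N G"
    unfolding N_def using subgroups_Inter_pair[OF normalizer_imp_subgroup[OF subgroup.subset[OF Ms]] P(1)] .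
  have MN: "M \<subseteq> N" unfolding N_def using subgroup_subset_normalizer[OF Ms] MP(1) by blast
  have "N = P"
  proof (rule ccontr)
    assume "N \<noteq> P"
    then have "N \<in> \<K>" using Ns MN KM unfolding \<K>_def N_def by auto
    then have "card N \<le> card M" by (rule max)
    moreover have "card M < card N"
    proof (rule psubset_card_mono)
      show "finite N" using finite_subset[OF _ finP] unfolding N_def by simp
      show "M \<subset> N" using MN g unfolding N_def by blast
    qed
    ultimately show False by simp
  qed
  then have "P \<subseteq> normalizer G M" unfolding N_def by blast
  with Ms KM MP show ?thesis by (rule that)
qed

lemma cyclic_group_generate:
  assumes "x \<in> carrier G"
  shows "cyclic_group (G\<lparr>carrier := generate G {x}\<rparr>)"
  using cyclic_group_generated[of x] assms unfolding subgroup_generated_def by simp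

end

section \<open>The Fitting subgroup and subgroups of prime index\<close>

lemma comm_group_imp_nilpotent_grp:
  assumes "comm_group H"
  shows "nilpotent_grp H"
proof -
  interpret H: comm_group H by (rule assms)
  have "x \<otimes>\<^bsub>H\<^esub> y \<otimes>\<^bsub>H\<^esub> inv\<^bsub>H\<^esub> x \<otimes>\<^bsub>H\<^esub> inv\<^bsub>H\<^esub> y = \<one>\<^bsub>H\<^esub>"
    if "x \<in> carrier H" "y \<in> carrier H" for x y
  proof -
    have "x \<otimes>\<^bsub>H\<^esub> y \<otimes>\<^bsub>H\<^esub> inv\<^bsub>H\<^esub> x \<otimes>\<^bsub>H\<^esub> inv\<^bsub>H\<^esub> y
        = (x \<otimes>\<^bsub>H\<^esub> y) \<otimes>\<^bsub>H\<^esub> (inv\<^bsub>H\<^esub> y \<otimes>\<^bsub>H\<^esub> inv\<^bsub>H\<^esub> x)"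
      using that H.m_comm[of "inv\<^bsub>H\<^esub> x" "inv\<^bsub>H\<^esub> y"] by (simp add: H.m_assoc)
    then show ?thesis using that by (simp add: H.inv_mult_group[symmetric])
  qed
  then have "{x \<otimes>\<^bsub>H\<^esub> y \<otimes>\<^bsub>H\<^esub> inv\<^bsub>H\<^esub> x \<otimes>\<^bsub>H\<^esub> inv\<^bsub>H\<^esub> y | x y.
              x \<in> lower_central H 0 \<and> y \<in> carrier H} = {\<one>\<^bsub>H\<^esub>}"
    using H.one_closed by (auto intro!: exI[of _ "\<one>\<^bsub>H\<^esub>"])
  then have "lower_central H 1 = {\<one>\<^bsub>H\<^esub>}" using H.generate_one by simp
  then show ?thesis unfolding nilpotent_grp_def by blast
qed

context group begin

lemma fitting_subgroup_normal: "fitting_subgroup G \<lhd> G"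
  unfolding fitting_subgroup_def
proof (rule normal_generateI)
  show "\<Union>{N. N \<lhd> G \<and> nilpotent_grp (G\<lparr>carrier := N\<rparr>)} \<subseteq> carrier G"
  proof
    fix h assume "h \<in> \<Union>{N. N \<lhd> G \<and> nilpotent_grp (G\<lparr>carrier := N\<rparr>)}"
    then obtain N where "N \<lhd> G" "h \<in> N" by blast
    then show "h \<in> carrier G" using normal_imp_subgroup subgroup.mem_carrier by metis
  qed
next
  fix h g assume "h \<in> \<Union>{N. N \<lhd> G \<and> nilpotent_grp (G\<lparr>carrier := N\<rparr>)}" and g: "g \<in> carrier G"
  then obtain N where N: "N \<lhd> G" "nilpotent_grp (G\<lparr>carrier := N\<rparr>)" "h \<in> N" by blast
  have "g \<otimes> h \<otimes> inv g \<in> N" using normal.inv_op_closed2[OF N(1) g N(3)] .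
  moreover have "N \<in> {N. N \<lhd> G \<and> nilpotent_grp (G\<lparr>carrier := N\<rparr>)}" using N(1,2) by simp
  ultimately show "g \<otimes> h \<otimes> inv g \<in> \<Union>{N. N \<lhd> G \<and> nilpotent_grp (G\<lparr>carrier := N\<rparr>)}"
    by (rule UnionI[rotated])
qed

lemma abelian_normal_subset_fitting_subgroup:
  assumes "N \<lhd> G" "comm_group (G\<lparr>carrier := N\<rparr>)"
  shows "N \<subseteq> fitting_subgroup G"
proof
  fix x assume "x \<in> N"
  then have "x \<in> \<Union>{N. N \<lhd> G \<and> nilpotent_grp (G\<lparr>carrier := N\<rparr>)}"
    using assms comm_group_imp_nilpotent_grp by blast
  then show "x \<in> fitting_subgroup G" unfolding fitting_subgroup_def by (rule generate.incl)
qed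

lemma rcos_nat_pow:
  assumes "N \<lhd> G" "g \<in> carrier G"
  shows "(N #> g) [^]\<^bsub>G Mod N\<^esub> (n::nat) = N #> (g [^] n)"
proof (induction n)
  case 0
  then show ?case
    using coset_mult_one[OF normal_imp_subgroup[OF assms(1), THEN subgroup.subset]]
    by (simp add: FactGroup_def)
next
  case (Suc n)
  then show ?case using normal.rcos_sum[OF assms(1)] assms(2) by (simp add: FactGroup_def)
qed

lemma pow_card_rcosets_mem:
  assumes N: "N \<lhd> G" and "finite (rcosets N)" and g: "g \<in> carrier G"
  shows "g [^] card (rcosets N) \<in> N"
proof -
  interpret N: normal N G by (rule N)
  interpret Q: group "G Mod N" by (rule N.factorgroup_is_group)
  have "N #> g \<in> carrier (G Mod N)" using g by (simp add: FactGroup_def rcosetsI N.subset)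
  then have "(N #> g) [^]\<^bsub>G Mod N\<^esub> order (G Mod N) = \<one>\<^bsub>G Mod N\<^esub>"
    using Q.pow_order_eq_1 assms(2) by (simp add: FactGroup_def)
  then have "N #> (g [^] card (rcosets N)) = N"
    using rcos_nat_pow[OF N g] by (simp add: FactGroup_def order_def)
  then show ?thesis using coset_join1[OF _ nat_pow_closed[OF g] N.subgroup_axioms] by simp
qed

lemma subgroup_ne_carrier_if_prime_index:
  assumes fin: "finite (carrier G)" and F: "subgroup F G" and p: "Factorial_Ring.prime (card (rcosets F))"
  shows "F \<noteq> carrier G"
proof
  assume "F = carrier G"
  then have "card (rcosets F) * order G = 1 * order G" using lagrange[OF F] by (simp add: order_def)
  then have "card (rcosets F) = 1" using fin order_gt_0_iff_finite by (metis mult_right_cancel not_gr0)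
  then show False using p by simp
qed

lemma prime_index_subgroup_maximal:
  assumes fin: "finite (carrier G)" and F: "subgroup F G" and p: "Factorial_Ring.prime (card (rcosets F))"
    and N: "subgroup N G" "F \<subseteq> N" "\<not> N \<subseteq> F"
  shows "N = carrier G"
proof -
  interpret NG: group "G\<lparr>carrier := N\<rparr>" using subgroup_imp_group[OF N(1)] .
  define i where "i = card (rcosets N)"
  define j where "j = card (rcosets\<^bsub>G\<lparr>carrier := N\<rparr>\<^esub> F)"
  have i: "i * card N = order G" unfolding i_def using lagrange[OF N(1)] .
  have j: "j * card F = card N"
    unfolding j_def using NG.lagrange[OF subgroup_incl[OF F N(1,2)]] by (simp add: order_def)
  have finN: "finite N" using finite_subset[OF subgroup.subset[OF N(1)] fin] .
  have "card F < card N" using psubset_card_mono[OF finN] N(2,3) by blast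
  then have "j \<noteq> 1" using j by auto
  have "card F > 0"
    using finite_subset[OF N(2) finN] subgroup.one_closed[OF F] by (auto simp: card_gt_0_iff)
  moreover have "card (rcosets F) * card F = (i * j) * card F"
    using i j lagrange[OF F] by (simp add: mult.assoc)
  ultimately have "card (rcosets F) = i * j" by simp
  then have "i = 1" using p prime_product[of i j] \<open>j \<noteq> 1\<close> by simp
  then show ?thesis
    using i card_subset_eq[OF fin subgroup.subset[OF N(1)]] by (simp add: order_def)
qed

lemma sylow_not_subset_prime_index:
  assumes fin: "finite (carrier G)" and F: "subgroup F G"
    and p: "card (rcosets F) = p" "Factorial_Ring.prime p" and P: "sylow_subgroup G p P"
  shows "\<not> P \<subseteq> F"
proof
  define a where "a = multiplicity p (order G)"
  have Ps: "subgroup P G" and card_P: "card P = p ^ a" using P unfolding sylow_subgroup_def a_def by auto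
  assume "P \<subseteq> F"
  have "p ^ Suc a = p * card P" using card_P by simp
  also have "\<dots> dvd p * card F"
    using card_subgroup_dvd[OF Ps F \<open>P \<subseteq> F\<close>] by (rule mult_dvd_mono[OF dvd_refl])
  also have "\<dots> = order G" using lagrange[OF F] p(1) by simp
  finally have "p ^ Suc a dvd order G" .
  moreover have "order G \<noteq> 0" using fin subgroup.one_closed[OF F] subgroup.subset[OF F]
    by (auto simp: order_def)
  ultimately have "Suc a \<le> a" unfolding a_def using power_dvd_iff_le_multiplicity not_prime_unit p(2) by blast
  then show False by simp
qed

lemma coprime_subgroup_subset:
  assumes F: "subgroup F G" and P: "subgroup P G" "finite P"
    and pow: "\<And>g. g \<in> carrier G \<Longrightarrow> g [^] n \<in> F" and cop: "coprime n (card P)"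
  shows "P \<subseteq> F"
proof
  fix y assume y: "y \<in> P"
  then have yc: "y \<in> carrier G" using subgroup.subset[OF P(1)] by blast
  have "card P \<noteq> 0" using P y by auto
  moreover have "gcd (card P) n = 1" using cop by (metis coprime_commute coprime_iff_gcd_eq_1)
  ultimately obtain s t where st: "card P * s = n * t + 1" using bezout_nat[of "card P" n] by auto
  have "(y [^] n) [^] t \<otimes> y = y [^] (card P * s)"
    using yc st by (simp add: nat_pow_pow nat_pow_mult[symmetric])
  also have "\<dots> = \<one>" using subgroup_pow_card_eq_one[OF P y] yc by (simp add: nat_pow_pow[symmetric])
  finally have "inv y = (y [^] n) [^] t" using yc by (intro inv_equality) simp_all
  then have "inv y \<in> F" using subgroup_nat_pow_closed[OF F pow[OF yc]] by simp
  then show "y \<in> F" using subgroup.m_inv_closed[OF F] yc by fastforce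
qed

lemma sylow_subset_prime_index_normal:
  assumes fin: "finite (carrier G)" and F: "F \<lhd> G"
    and p: "card (rcosets F) = p" "Factorial_Ring.prime p"
    and r: "Factorial_Ring.prime r" "r \<noteq> p" and P: "sylow_subgroup G r P"
  shows "P \<subseteq> F"
proof -
  have Ps: "subgroup P G" and card_P: "card P = r ^ multiplicity r (order G)"
    using P unfolding sylow_subgroup_def by auto
  have "g [^] p \<in> F" if "g \<in> carrier G" for g
    using pow_card_rcosets_mem[OF F _ that] p by (metis card.infinite not_prime_0)
  moreover have "coprime p (card P)" using card_P r primes_coprime[OF p(2)] by simp
  ultimately show ?thesis
    using coprime_subgroup_subset[OF normal_imp_subgroup[OF F] Ps]
      finite_subset[OF subgroup.subset[OF Ps] fin] by blast
qed

end

section \<open>Abelian normal subgroups\<close>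

context group begin

lemma comm_group_subgroup_subset:
  assumes "comm_group (G\<lparr>carrier := F\<rparr>)" "subgroup P G" "P \<subseteq> F"
  shows "comm_group (G\<lparr>carrier := P\<rparr>)"
proof (rule group.group_comm_groupI[OF subgroup_imp_group[OF assms(2)]])
  fix x y assume "x \<in> carrier (G\<lparr>carrier := P\<rparr>)" "y \<in> carrier (G\<lparr>carrier := P\<rparr>)"
  then show "x \<otimes>\<^bsub>G\<lparr>carrier := P\<rparr>\<^esub> y = y \<otimes>\<^bsub>G\<lparr>carrier := P\<rparr>\<^esub> x"
    using comm_monoid.m_comm[OF comm_group.axioms(1)[OF assms(1)], of x y] assms(3) by auto
qed

lemma abelian_normal_pow_eq_one_normal:
  assumes N: "N \<lhd> G" and A: "comm_group (G\<lparr>carrier := N\<rparr>)"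
  shows "{x \<in> N. x [^] (e::nat) = \<one>} \<lhd> G"
proof (rule normal_invI)
  interpret N: normal N G by (rule N)
  interpret A: comm_group "G\<lparr>carrier := N\<rparr>" by (rule A)
  show "subgroup {x \<in> N. x [^] e = \<one>} G"
  proof (rule subgroupI)
    fix a b assume a: "a \<in> {x \<in> N. x [^] e = \<one>}" and b: "b \<in> {x \<in> N. x [^] e = \<one>}"
    then have ab: "a \<in> carrier G" "b \<in> carrier G" using N.subset by auto
    show "inv a \<in> {x \<in> N. x [^] e = \<one>}" using a ab nat_pow_inv N.m_inv_closed by simp
    have "a \<otimes> b = b \<otimes> a" using A.m_comm a b by simp
    then show "a \<otimes> b \<in> {x \<in> N. x [^] e = \<one>}" using a b ab pow_mult_distrib N.m_closed by simp
  qed (use N.subset N.one_closed in \<open>auto intro!: exI[of _ \<one>]\<close>)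
  fix g h assume "g \<in> carrier G" "h \<in> {x \<in> N. x [^] e = \<one>}"
  then show "g \<otimes> h \<otimes> inv g \<in> {x \<in> N. x [^] e = \<one>}"
    using N.inv_op_closed2 conj_nat_pow N.subset by auto
qed

lemma normal_mult_nat_pow:
  assumes K: "K \<lhd> G" and y: "y \<in> carrier G" and k: "k \<in> K"
  shows "\<exists>k' \<in> K. (k \<otimes> y) [^] (m::nat) = k' \<otimes> y [^] m"
proof (induction m)
  interpret K: normal K G by (rule K)
  case 0
  show ?case using K.one_closed by force
next
  interpret K: normal K G by (rule K)
  case (Suc m)
  then obtain k' where k': "k' \<in> K" "(k \<otimes> y) [^] m = k' \<otimes> y [^] m" by blast
  have kc: "k \<in> carrier G" "k' \<in> carrier G" using k k'(1) K.subset by auto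
  have "(k \<otimes> y) [^] Suc m = (k' \<otimes> (y [^] m \<otimes> k \<otimes> inv (y [^] m))) \<otimes> y [^] Suc m"
    using k' kc y by (simp add: m_assoc)
  moreover have "k' \<otimes> (y [^] m \<otimes> k \<otimes> inv (y [^] m)) \<in> K"
    using K.m_closed[OF k'(1) K.inv_op_closed2[OF nat_pow_closed[OF y] k]] .
  ultimately show ?case by blast
qed

lemma normal_exponent_subset_sylow:
  assumes fin: "finite (carrier G)" and p: "Factorial_Ring.prime p"
    and K: "K \<lhd> G" "\<And>k. k \<in> K \<Longrightarrow> k [^] (p ^ c) = \<one>"
    and P: "sylow_subgroup G p P"
  shows "K \<subseteq> P"
proof -
  define a where "a = multiplicity p (order G)"
  have Ps: "subgroup P G" and card_P: "card P = p ^ a"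
    using P unfolding sylow_subgroup_def a_def by auto
  have Kc: "K \<subseteq> carrier G" using normal_imp_subgroup[OF K(1), THEN subgroup.subset] .
  have Pc: "P \<subseteq> carrier G" using subgroup.subset[OF Ps] .
  define S where "S = K <#> P"
  have Ss: "subgroup S G" unfolding S_def using mult_norm_subgroup[OF K(1) Ps] .
  have Sc: "S \<subseteq> carrier G" using subgroup.subset[OF Ss] .
  have finS: "finite S" using finite_subset[OF Sc fin] .
  have KS: "K \<subseteq> S" and PS: "P \<subseteq> S"
    unfolding S_def set_mult_def
    using Kc Pc subgroup.one_closed[OF Ps] normal_imp_subgroup[OF K(1), THEN subgroup.one_closed]
    by (auto intro!: bexI[of _ \<one>] simp: subsetD)
  have "s [^] (p ^ a * p ^ c) = \<one>" if s: "s \<in> S" for s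
  proof -
    obtain k y where ky: "k \<in> K" "y \<in> P" "s = k \<otimes> y" using s unfolding S_def set_mult_def by blast
    obtain k' where k': "k' \<in> K" "s [^] (p ^ a) = k' \<otimes> y [^] (p ^ a)"
      using normal_mult_nat_pow[OF K(1) _ ky(1)] ky(2,3) Pc by blast
    have "y [^] (p ^ a) = \<one>"
      using subgroup_pow_card_eq_one[OF Ps finite_subset[OF Pc fin] ky(2)] card_P by simp
    then have "s [^] (p ^ a) = k'" using k' Kc by auto
    then show ?thesis using K(2)[OF k'(1)] s Sc by (simp add: nat_pow_pow[symmetric] subsetD)
  qed
  then have "card S = p ^ multiplicity p (card S)"
    using card_eq_prime_power_if_exponent[OF Ss finS p, of "a + c"] by (simp add: power_add)
  then have "card S \<le> card P" using card_prime_power_subgroup_le_sylow[OF fin p Ss _ P] by blast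
  then have "S = P" using card_seteq[OF finS PS] by simp
  then show ?thesis using KS by simp
qed

lemma subset_set_mult_coprime_exponents:
  fixes u v :: nat
  assumes H: "subgroup H G" and exp: "\<And>x. x \<in> H \<Longrightarrow> x [^] (u * v) = \<one>" and cop: "coprime u v"
  shows "H \<subseteq> {a \<in> H. a [^] u = \<one>} <#> {b \<in> H. b [^] v = \<one>}"
proof
  fix x assume x: "x \<in> H"
  then have xc: "x \<in> carrier G" using subgroup.subset[OF H] by blast
  show "x \<in> {a \<in> H. a [^] u = \<one>} <#> {b \<in> H. b [^] v = \<one>}"
  proof (cases "u = 0")
    case True
    then have "x \<in> {a \<in> H. a [^] u = \<one>}" "\<one> \<in> {b \<in> H. b [^] v = \<one>}"
      using x subgroup.one_closed[OF H] by simp_all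
    moreover have "x = x \<otimes> \<one>" using xc by simp
    ultimately show ?thesis unfolding set_mult_def by blast
  next
    case False
    obtain s t where "u * s = v * t + gcd u v" using bezout_nat[OF False] by blast
    then have st: "u * s = Suc (v * t)" using cop by simp
    define a where "a = inv (x [^] (v * t))"
    define b where "b = x [^] (u * s)"
    have "x = a \<otimes> b" unfolding a_def b_def st using xc by simp
    moreover have "a [^] u = inv ((x [^] (u * v)) [^] t)"
      unfolding a_def using xc by (simp add: nat_pow_inv nat_pow_pow ac_simps)
    moreover have "b [^] v = (x [^] (u * v)) [^] s"
      unfolding b_def using xc by (simp add: nat_pow_pow ac_simps)
    moreover have "a \<in> H" "b \<in> H"
      unfolding a_def b_def using subgroup.m_inv_closed[OF H] subgroup_nat_pow_closed[OF H x] by simp_all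
    ultimately show ?thesis using exp[OF x] unfolding set_mult_def by auto
  qed
qed

lemma subset_of_subset_set_mult:
  assumes P: "subgroup P G" and Q: "Q \<subseteq> carrier G" and M: "M \<subseteq> P"
    and PQM: "P \<subseteq> Q <#> M" and PQ: "P \<inter> Q \<subseteq> {\<one>}"
  shows "P \<subseteq> M"
proof
  fix y assume y: "y \<in> P"
  then obtain q m where qm: "q \<in> Q" "m \<in> M" "y = q \<otimes> m" using PQM unfolding set_mult_def by blast
  have mP: "m \<in> P" using M qm(2) by blast
  have qc: "q \<in> carrier G" and mc: "m \<in> carrier G" using qm(1) Q mP subgroup.subset[OF P] by auto
  have "q = y \<otimes> inv m" using qm(3) qc mc by (simp add: m_assoc)
  then have "q \<in> P" using subgroup.m_closed[OF P y subgroup.m_inv_closed[OF P mP]] by simp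
  then have "q = \<one>" using PQ qm(1) by blast
  then show "y \<in> M" using qm(2,3) mc by simp
qed

lemma abelian_normal_p_complement:
  assumes fin: "finite (carrier G)" and F: "F \<lhd> G" "comm_group (G\<lparr>carrier := F\<rparr>)"
    and p: "Factorial_Ring.prime p" and P: "sylow_subgroup G p P"
  obtains Q where "Q \<lhd> G" "F \<subseteq> Q <#> P" "P \<inter> Q \<subseteq> {\<one>}"
proof -
  define a where "a = multiplicity p (order G)"
  define n' where "n' = order G div p ^ a"
  have Fs: "subgroup F G" using normal_imp_subgroup[OF F(1)] .
  have Ps: "subgroup P G" and card_P: "card P = p ^ a" using P unfolding sylow_subgroup_def a_def by auto
  have "order G \<noteq> 0" using fin order_gt_0_iff_finite by simp
  moreover have "\<not> is_unit p" using p not_prime_unit by blast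
  ultimately have "\<not> p dvd n'" unfolding n'_def a_def by (rule multiplicity_decompose)
  have order: "order G = n' * p ^ a" unfolding n'_def a_def using multiplicity_dvd[of p "order G"] by simp
  from \<open>\<not> p dvd n'\<close> have cop: "coprime n' (p ^ a)" using prime_imp_coprime[OF p] by (simp add: coprime_commute)
  define Q where "Q = {f \<in> F. f [^] n' = \<one>}"
  define K where "K = {f \<in> F. f [^] (p ^ a) = \<one>}"
  have "K \<subseteq> P"
    using normal_exponent_subset_sylow[OF fin p abelian_normal_pow_eq_one_normal[OF F] _ P]
    unfolding K_def by blast
  moreover have "F \<subseteq> Q <#> K"
    unfolding Q_def K_def using subset_set_mult_coprime_exponents[OF Fs _ cop] pow_order_eq_1 order
      subgroup.mem_carrier[OF Fs] by metis
  ultimately have "F \<subseteq> Q <#> P" unfolding set_mult_def by blast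
  moreover have "y = \<one>" if "y \<in> P" "y \<in> Q" for y
  proof (rule pow_eq_one_coprime[OF _ _ _ cop])
    show "y \<in> carrier G" using that(1) subgroup.subset[OF Ps] by blast
    show "y [^] n' = \<one>" using that(2) unfolding Q_def by simp
    show "y [^] (p ^ a) = \<one>"
      using subgroup_pow_card_eq_one[OF Ps finite_subset[OF subgroup.subset[OF Ps] fin] that(1)] card_P by simp
  qed
  moreover have "Q \<lhd> G" unfolding Q_def using abelian_normal_pow_eq_one_normal[OF F] .
  ultimately show ?thesis using that by blast
qed

end

section \<open>Groups in the class \<open>\<Y>\<^sub>n\<close>\<close>

context group begin

lemma class_Yn_normal_abelian:
  assumes Yn: "class_Yn G" and N: "N \<lhd> G" "N \<noteq> carrier G"
  shows "comm_group (G\<lparr>carrier := N\<rparr>)"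
proof (rule ccontr)
  have Ns: "subgroup N G" using normal_imp_subgroup[OF N(1)] .
  assume "\<not> comm_group (G\<lparr>carrier := N\<rparr>)"
  then have "normalizer G N = N" using Yn Ns unfolding class_Yn_def by blast
  then have "carrier G \<subseteq> N" using normal_iff_carrier_subset_normalizer[OF Ns] N(1) by simp
  then show False using N(2) subgroup.subset[OF Ns] by blast
qed

lemma class_Yn_normalized_subgroup_subset_fitting:
  assumes fin: "finite (carrier G)" and Yn: "class_Yn G"
    and F: "F \<lhd> G" "comm_group (G\<lparr>carrier := F\<rparr>)"
    and F_max: "\<And>N. N \<lhd> G \<Longrightarrow> comm_group (G\<lparr>carrier := N\<rparr>) \<Longrightarrow> N \<subseteq> F"
    and p: "card (rcosets F) = p" "Factorial_Ring.prime p" and P: "sylow_subgroup G p P"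
    and M: "subgroup M G" "M \<subseteq> P" "M \<noteq> P" "P \<subseteq> normalizer G M"
  shows "M \<subseteq> F"
proof (rule ccontr)
  assume "\<not> M \<subseteq> F"
  then obtain x where x: "x \<in> M" "x \<notin> F" by blast
  have Ps: "subgroup P G" using P unfolding sylow_subgroup_def by blast
  obtain Q where Q: "Q \<lhd> G" "F \<subseteq> Q <#> P" "P \<inter> Q \<subseteq> {\<one>}"
    using abelian_normal_p_complement[OF fin F p(2) P] .
  have Qc: "Q \<subseteq> carrier G" using normal_imp_subgroup[OF Q(1), THEN subgroup.subset] .
  define H where "H = Q <#> M"
  have Hs: "subgroup H G" unfolding H_def using mult_norm_subgroup[OF Q(1) M(1)] .
  have QH: "Q \<subseteq> H" and MH: "M \<subseteq> H"
    unfolding H_def set_mult_def using Qc subgroup.subset[OF M(1)]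
      subgroup.one_closed[OF M(1)] normal_imp_subgroup[OF Q(1), THEN subgroup.one_closed]
    by (auto intro!: bexI[of _ \<one>] simp: subsetD)
  have PH: "P \<subseteq> normalizer G H"
    unfolding H_def using normalizer_set_mult[OF Q(1) subgroup.subset[OF M(1)] Ps M(4)] .
  have H_comm: "comm_group (G\<lparr>carrier := H\<rparr>)"
  proof (rule ccontr)
    assume "\<not> comm_group (G\<lparr>carrier := H\<rparr>)"
    then have "normalizer G H = H" using Yn Hs unfolding class_Yn_def by blast
    then have "P \<subseteq> M" using subset_of_subset_set_mult[OF Ps Qc M(2) _ Q(3)] PH unfolding H_def by simp
    then show False using M(2,3) by blast
  qed
  define N where "N = normalizer G H"
  have Ns: "subgroup N G" unfolding N_def using normalizer_imp_subgroup[OF subgroup.subset[OF Hs]] .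
  have HN: "H \<subseteq> N" unfolding N_def using subgroup_subset_normalizer[OF Hs] .
  have "Q <#> P \<subseteq> N"
    unfolding set_mult_def using subgroup.m_closed[OF Ns] QH HN PH unfolding N_def by blast
  then have "N = carrier G"
    using prime_index_subgroup_maximal[OF fin normal_imp_subgroup[OF F(1)] _ Ns] p Q(2) x MH HN
    by blast
  then have "H \<lhd> G" using normal_iff_carrier_subset_normalizer[OF Hs] unfolding N_def by simp
  then show False using F_max[OF _ H_comm] x MH by blast
qed

lemma class_Yn_sylow_cyclic:
  assumes fin: "finite (carrier G)" and Yn: "class_Yn G"
    and F: "F \<lhd> G" "comm_group (G\<lparr>carrier := F\<rparr>)"
    and F_max: "\<And>N. N \<lhd> G \<Longrightarrow> comm_group (G\<lparr>carrier := N\<rparr>) \<Longrightarrow> N \<subseteq> F"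
    and p: "card (rcosets F) = p" "Factorial_Ring.prime p" and P: "sylow_subgroup G p P"
  shows "cyclic_group (G\<lparr>carrier := P\<rparr>)"
proof -
  have Ps: "subgroup P G" and card_P: "card P = p ^ multiplicity p (order G)"
    using P unfolding sylow_subgroup_def by auto
  obtain x where x: "x \<in> P" "x \<notin> F"
    using sylow_not_subset_prime_index[OF fin normal_imp_subgroup[OF F(1)] p P] by blast
  have xc: "x \<in> carrier G" using x(1) subgroup.subset[OF Ps] by blast
  have X: "subgroup (generate G {x}) G" "generate G {x} \<subseteq> P"
    using generate_is_subgroup generate_subgroup_incl[OF _ Ps] xc x(1) by auto
  show ?thesis
  proof (cases "generate G {x} = P")
    case True
    then show ?thesis using cyclic_group_generate[OF xc] by simp
  next
    case False
    then obtain M where M: "subgroup M G" "generate G {x} \<subseteq> M" "M \<subseteq> P" "M \<noteq> P"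
      "P \<subseteq> normalizer G M"
      using p_subgroup_normalized_maximal_subgroup[OF Ps card_P p(2) X] by blast
    then have "M \<subseteq> F" using class_Yn_normalized_subgroup_subset_fitting[OF fin Yn F F_max p P] by blast
    moreover have "x \<in> M" using M(2) generate.incl[of x "{x}" G] by blast
    ultimately show ?thesis using x(2) by blast
  qed
qed

end

theorem lemma2p7:
  fixes G (structure) and p :: nat
  assumes "group G"
    and "finite (carrier G)"
    and "class_Yn G"
    and "solvable G"
    and "\<not> nilpotent_grp G"
    and "p = card (rcosets (fitting_subgroup G))"
    and "Factorial_Ring.prime p"
  shows "(\<forall>P. sylow_subgroup G p P \<longrightarrow> cyclic_group (G\<lparr>carrier := P\<rparr>))
       \<and> (\<forall>r P. Factorial_Ring.prime (r::nat) \<and> r \<noteq> p \<and> sylow_subgroup G r P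
                  \<longrightarrow> comm_group (G\<lparr>carrier := P\<rparr>))"
proof -
  interpret group G by (rule assms(1))
  define F where "F = fitting_subgroup G"
  have F: "F \<lhd> G" unfolding F_def by (rule fitting_subgroup_normal)
  have index: "card (rcosets F) = p" using assms(6) unfolding F_def by simp
  have F_max: "N \<subseteq> F" if "N \<lhd> G" "comm_group (G\<lparr>carrier := N\<rparr>)" for N
    unfolding F_def using abelian_normal_subset_fitting_subgroup[OF that] .
  have "F \<noteq> carrier G"
    using subgroup_ne_carrier_if_prime_index[OF assms(2) normal_imp_subgroup[OF F]] index assms(7) by simp
  then have F_comm: "comm_group (G\<lparr>carrier := F\<rparr>)" using class_Yn_normal_abelian[OF assms(3) F] by blast
  show ?thesis
  proof (intro conjI allI impI)
    fix P assume "sylow_subgroup G p P"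
    then show "cyclic_group (G\<lparr>carrier := P\<rparr>)"
      using class_Yn_sylow_cyclic[OF assms(2,3) F F_comm F_max index assms(7)] by blast
  next
    fix r P assume "Factorial_Ring.prime r \<and> r \<noteq> p \<and> sylow_subgroup G r P"
    then show "comm_group (G\<lparr>carrier := P\<rparr>)"
      using sylow_subset_prime_index_normal[OF assms(2) F index assms(7)]
        comm_group_subgroup_subset[OF F_comm] unfolding sylow_subgroup_def by blast
  qed
qed

end
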